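(* Let $\phi_1,\phi_2\colon\mathbb{R}\to[0,\infty)$ be continuous probability density functions such that $I_1=\{x:\phi_1(x)>0\}=(a_1,b_1)$ and $I_2=\{y:\phi_2(y)>0\}=(a_2,b_2)$ are bounded open intervals, with $a_1=0$. Let $F_1,F_2$ be the corresponding cumulative distribution functions, and define $K\colon[a_1,b_1]\to[a_2,b_2]$ by $K(x)=F_2^{-1}(F_1(x))$, where $F_2^{-1}$ is the inverse of the continuous strictly increasing bijection $F_2\colon[a_2,b_2]\to[0,1]$. Let $q\colon\mathbb{R}\to[0,\infty)$ be uniformly continuous and Lebesgue integrable, and set $$V=\int_{I_1} x\,\frac{\phi_1(x)}{\phi_2(K(x))}\,q(K(x))\,dx .$$ For $n\ge 1$ and $k=0,1,\dots,n$ let $x^{(n)}_k\in[a_1,b_1]$ be the point with $F_1(x^{(n)}_k)=k/n$ (so $x^{(n)}_0=a_1$, $x^{(n)}_n=b_1$, and $\int_{x^{(n)}_k}^{x^{(n)}_{k+1}}\phi_1=1/n$), let $y^{(n)}_k=K(x^{(n)}_k)$, and define $$V_n=\sum_{k=0}^{n-1}\frac{x^{(n)}_{k+1}+x^{(n)}_k}{2}\int_{y^{(n)}_k}^{y^{(n)}_{k+1}}q(s)\,ds .$$ Then $V_n\to V$ as $n\to\infty$.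
   Context: Financial interpretation (not needed for the claim): $\phi_1$ is the density of a one-step cash flow at horizon $T$, $\phi_2$ the density of the terminal value $S(T)$ of a traded benchmark security, $q$ the state price density of $S(T)$ (the second strike-derivative of the call price function), $V$ the value of the continuous portfolio of Arrow–Debreu securities replicating the cash flow distribution, and $V_n$ the value of the finite portfolio of cash-or-nothing calls approximating it. *)

theory Defs
  imports "HOL-Analysis.Analysis"
begin

definition cdf :: "(real \<Rightarrow> real) \<Rightarrow> real \<Rightarrow> real" where
  "cdf phi x = integral {..x} phi"

definition Kmap :: "(real \<Rightarrow> real) \<Rightarrow> (real \<Rightarrow> real) \<Rightarrow> real \<Rightarrow> real \<Rightarrow> real \<Rightarrow> real" where
  "Kmap phi1 phi2 a2 b2 x = the_inv_into {a2..b2} (cdf phi2) (cdf phi1 x)"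

definition gridpt :: "(real \<Rightarrow> real) \<Rightarrow> real \<Rightarrow> real \<Rightarrow> nat \<Rightarrow> nat \<Rightarrow> real" where
  "gridpt phi1 a1 b1 n k = the_inv_into {a1..b1} (cdf phi1) (real k / real n)"

end

theory Submission
  imports Defs
begin

text \<open>
  Pulled back along \<open>K\<close>, the primitive \<open>R x = integral {a2..K x} q\<close> is continuous and increasing
  on \<open>[a1,b1]\<close> with derivative \<open>\<phi>1 x * q (K x) / \<phi>2 (K x)\<close> inside, so \<open>V\<close> is the Stieltjes
  integral of \<open>x\<close> against \<open>dR\<close> and \<open>V\<^sub>n\<close> is its midpoint sum over the quantile grid
  \<open>x\<^sub>k = F1\<^sup>-\<^sup>1 (k/n)\<close>. On each cell the midpoint differs from \<open>x\<close> by at most half the cell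
  width, so \<open>|V\<^sub>n - V|\<close> is at most half the mesh times \<open>R b1 - R a1\<close>; the mesh tends to 0 because
  \<open>F1\<^sup>-\<^sup>1\<close> is uniformly continuous on \<open>[0,1]\<close>.
\<close>

lemma integral_has_real_derivative_interior:
  assumes "continuous_on {a..b} f" and "x \<in> {a<..<b}"
  shows "((\<lambda>y. integral {a..y} f) has_real_derivative f x) (at x)"
proof -
  have "((\<lambda>y. integral {a..y} f) has_real_derivative f x) (at x within {a..b})"
    by (rule integral_has_real_derivative) (use assms in auto)
  with assms(2) show ?thesis by (simp add: at_within_Icc_at)
qed

lemma moment_midpoint_error:
  fixes g :: "real \<Rightarrow> real"
  assumes "s \<le> t" and g: "(g has_integral I) {s..t}"
    and xg: "((\<lambda>x. x * g x) has_integral J) {s..t}"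
    and g_nonneg: "\<And>x. x \<in> {s..t} \<Longrightarrow> 0 \<le> g x"
  shows "\<bar>(t + s) / 2 * I - J\<bar> \<le> (t - s) / 2 * I"
proof -
  define m h where "m = (t + s) / 2" and "h = (t - s) / 2"
  have dev: "((\<lambda>x. x * g x - m * g x) has_integral J - m * I) {s..t}"
    by (intro has_integral_diff xg has_integral_mult_right g)
  have half: "((\<lambda>x. h * g x) has_integral h * I) {s..t}"
    by (rule has_integral_mult_right[OF g])
  have "J - m * I \<le> h * I"
  proof (rule has_integral_le[OF dev half])
    fix x assume "x \<in> {s..t}"
    then have "(x - t) * g x \<le> 0" by (intro mult_nonpos_nonneg g_nonneg) auto
    then show "x * g x - m * g x \<le> h * g x" by (simp add: m_def h_def field_simps)
  qed
  moreover have "- (h * I) \<le> J - m * I"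
  proof (rule has_integral_le[OF has_integral_neg[OF half] dev])
    fix x assume "x \<in> {s..t}"
    then have "0 \<le> (x - s) * g x" by (intro mult_nonneg_nonneg g_nonneg) auto
    then show "- (h * g x) \<le> x * g x - m * g x" by (simp add: m_def h_def field_simps)
  qed
  ultimately show ?thesis unfolding m_def h_def by linarith
qed

text \<open>Integration by parts: for \<open>R' = g\<close> this is a primitive of \<open>x g(x)\<close>.\<close>

definition moment_primitive :: "(real \<Rightarrow> real) \<Rightarrow> real \<Rightarrow> real \<Rightarrow> real" where
  "moment_primitive R a x = x * R x - integral {a..x} R"

lemma has_integral_id_mult_derivative:
  fixes R g :: "real \<Rightarrow> real"
  assumes R: "continuous_on {a..b} R"
    and R': "\<And>x. x \<in> {a<..<b} \<Longrightarrow> (R has_real_derivative g x) (at x)"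
    and "a \<le> s" "s \<le> t" "t \<le> b"
  shows "((\<lambda>x. x * g x) has_integral
           moment_primitive R a t - moment_primitive R a s) {s..t}"
proof (rule fundamental_theorem_of_calculus_interior)
  show "continuous_on {s..t} (moment_primitive R a)"
    unfolding moment_primitive_def[abs_def] using assms
    by (intro continuous_intros continuous_on_subset[OF R] continuous_on_subset[OF
        indefinite_integral_continuous_1[OF integrable_continuous_real[OF R]]]) auto
  fix x assume "x \<in> {s<..<t}"
  then have x: "x \<in> {a<..<b}" using assms by auto
  have "(moment_primitive R a has_real_derivative x * g x + 1 * R x - R x) (at x)"
    unfolding moment_primitive_def[abs_def]
    by (intro DERIV_diff DERIV_mult' DERIV_ident R' x integral_has_real_derivative_interior[OF R x])
  then show "(moment_primitive R a has_vector_derivative x * g x) (at x)"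
    by (simp add: has_real_derivative_iff_has_vector_derivative)
qed fact

lemma midpoint_sum_error:
  fixes x :: "nat \<Rightarrow> real" and g G P :: "real \<Rightarrow> real"
  assumes mono: "\<And>k. k < n \<Longrightarrow> x k \<le> x (Suc k)"
    and gap: "\<And>k. k < n \<Longrightarrow> x (Suc k) - x k \<le> e"
    and g: "\<And>k. k < n \<Longrightarrow> (g has_integral G (x (Suc k)) - G (x k)) {x k..x (Suc k)}"
    and xg: "\<And>k. k < n \<Longrightarrow>
      ((\<lambda>y. y * g y) has_integral P (x (Suc k)) - P (x k)) {x k..x (Suc k)}"
    and g_nonneg: "\<And>k y. k < n \<Longrightarrow> y \<in> {x k..x (Suc k)} \<Longrightarrow> 0 \<le> g y"
  shows "\<bar>(\<Sum>k<n. (x (Suc k) + x k) / 2 * (G (x (Suc k)) - G (x k))) - (P (x n) - P (x 0))\<bar>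
           \<le> e / 2 * (G (x n) - G (x 0))"
proof -
  have dG_nonneg: "0 \<le> G (x (Suc k)) - G (x k)" if "k < n" for k
    using has_integral_nonneg[OF g] g_nonneg that by blast
  have telescope: "P (x n) - P (x 0) = (\<Sum>k<n. P (x (Suc k)) - P (x k))"
    by (rule sum_lessThan_telescope[symmetric])
  have "\<bar>(\<Sum>k<n. (x (Suc k) + x k) / 2 * (G (x (Suc k)) - G (x k))) - (P (x n) - P (x 0))\<bar>
      = \<bar>\<Sum>k<n. (x (Suc k) + x k) / 2 * (G (x (Suc k)) - G (x k)) - (P (x (Suc k)) - P (x k))\<bar>"
    by (simp only: telescope sum_subtractf)
  also have "\<dots> \<le> (\<Sum>k<n. (x (Suc k) - x k) / 2 * (G (x (Suc k)) - G (x k)))"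
    by (intro order_trans[OF sum_abs] sum_mono moment_midpoint_error[where g = g] mono g xg g_nonneg) auto
  also have "\<dots> \<le> (\<Sum>k<n. e / 2 * (G (x (Suc k)) - G (x k)))"
    by (intro sum_mono mult_right_mono dG_nonneg) (auto dest: gap)
  also have "\<dots> = e / 2 * (G (x n) - G (x 0))"
    by (simp only: sum_distrib_left[symmetric] sum_lessThan_telescope[of "\<lambda>k. G (x k)"])
  finally show ?thesis .
qed

lemma uniform_grid_gaps_eventually_small:
  fixes f :: "real \<Rightarrow> real"
  assumes "continuous_on {0..1} f" and "0 < e"
  shows "\<forall>\<^sub>F n in sequentially. \<forall>k<n. \<bar>f (real (Suc k) / real n) - f (real k / real n)\<bar> < e"
proof -
  obtain d where "0 < d" and d: "\<And>s t. s \<in> {0..1} \<Longrightarrow> t \<in> {0..1} \<Longrightarrow> dist t s < d \<Longrightarrow>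
      dist (f t) (f s) < e"
    using compact_uniformly_continuous[OF assms(1) compact_Icc] assms(2)
    unfolding uniformly_continuous_on_def by metis
  have "\<forall>\<^sub>F n in sequentially. 1 / real n < d"
    using order_tendstoD(2)[OF lim_inverse_n' \<open>0 < d\<close>] .
  then show ?thesis
  proof (rule eventually_mono)
    fix n :: nat and k assume n: "1 / real n < d"
    show "\<forall>k<n. \<bar>f (real (Suc k) / real n) - f (real k / real n)\<bar> < e"
    proof (intro allI impI)
      fix k assume "k < n"
      then have "real k / real n \<in> {0..1}" "real (Suc k) / real n \<in> {0..1}"
        by (auto simp: field_simps)
      moreover have "dist (real (Suc k) / real n) (real k / real n) < d"
        using n by (simp add: dist_real_def diff_divide_distrib[symmetric])
      ultimately show "\<bar>f (real (Suc k) / real n) - f (real k / real n)\<bar> < e"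
        using d by (simp add: dist_real_def)
    qed
  qed
qed

lemma midpoint_sum_error_derivative:
  fixes x :: "nat \<Rightarrow> real" and R g :: "real \<Rightarrow> real"
  assumes R: "continuous_on {a..b} R"
    and R': "\<And>y. y \<in> {a<..<b} \<Longrightarrow> (R has_real_derivative g y) (at y)"
    and g_nonneg: "\<And>y. y \<in> {a..b} \<Longrightarrow> 0 \<le> g y"
    and x_in: "\<And>k. k \<le> n \<Longrightarrow> x k \<in> {a..b}" and "x 0 = a" "x n = b"
    and mono: "\<And>k. k < n \<Longrightarrow> x k \<le> x (Suc k)"
    and gap: "\<And>k. k < n \<Longrightarrow> x (Suc k) - x k \<le> e"
  shows "\<bar>(\<Sum>k<n. (x (Suc k) + x k) / 2 * (R (x (Suc k)) - R (x k))) - integral {a..b} (\<lambda>y. y * g y)\<bar>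
           \<le> e / 2 * (R b - R a)"
proof -
  define P where "P = moment_primitive R a"
  have g_int: "(g has_integral R t - R s) {s..t}" if "a \<le> s" "s \<le> t" "t \<le> b" for s t
    using that by (intro fundamental_theorem_of_calculus_interior continuous_on_subset[OF R])
      (auto simp: has_real_derivative_iff_has_vector_derivative[symmetric] intro!: R')
  have xg_int: "((\<lambda>y. y * g y) has_integral P t - P s) {s..t}" if "a \<le> s" "s \<le> t" "t \<le> b" for s t
    unfolding P_def using that by (intro has_integral_id_mult_derivative[OF R R'])
  have "a \<le> b" using x_in[of 0] \<open>x 0 = a\<close> by simp
  have "integral {a..b} (\<lambda>y. y * g y) = P (x n) - P (x 0)"
    using xg_int[OF order_refl \<open>a \<le> b\<close> order_refl] assms(5,6) by (simp add: integral_unique)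
  moreover have "\<bar>(\<Sum>k<n. (x (Suc k) + x k) / 2 * (R (x (Suc k)) - R (x k))) - (P (x n) - P (x 0))\<bar>
      \<le> e / 2 * (R (x n) - R (x 0))"
  proof (rule midpoint_sum_error[where g = g])
    fix k assume k: "k < n"
    then have s: "a \<le> x k" and t: "x (Suc k) \<le> b" using x_in[of k] x_in[of "Suc k"] by auto
    show "x k \<le> x (Suc k)" "x (Suc k) - x k \<le> e" using mono gap k by auto
    show "(g has_integral R (x (Suc k)) - R (x k)) {x k..x (Suc k)}"
      by (rule g_int[OF s mono[OF k] t])
    show "((\<lambda>y. y * g y) has_integral P (x (Suc k)) - P (x k)) {x k..x (Suc k)}"
      by (rule xg_int[OF s mono[OF k] t])
    show "0 \<le> g y" if "y \<in> {x k..x (Suc k)}" for y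
      using that s t by (intro g_nonneg) auto
  qed
  ultimately show ?thesis using assms(5,6) by simp
qed

lemma midpoint_sums_quantile_grid_tendsto:
  fixes f R g :: "real \<Rightarrow> real"
  assumes f: "continuous_on {0..1} f" "mono_on {0..1} f" "f 0 = a" "f 1 = b"
    and R: "continuous_on {a..b} R"
    and R': "\<And>x. x \<in> {a<..<b} \<Longrightarrow> (R has_real_derivative g x) (at x)"
    and g_nonneg: "\<And>x. x \<in> {a..b} \<Longrightarrow> 0 \<le> g x"
  shows "(\<lambda>n. \<Sum>k<n. (f (real (Suc k) / real n) + f (real k / real n)) / 2 *
                   (R (f (real (Suc k) / real n)) - R (f (real k / real n))))
         \<longlonglongrightarrow> integral {a..b} (\<lambda>x. x * g x)"
    (is "?V \<longlonglongrightarrow> ?I")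
proof (rule tendstoI)
  fix r :: real assume "0 < r"
  define x where "x n k = f (real k / real n)" for n k :: nat
  have grid_in: "real k / real n \<in> {0..1}" if "k \<le> n" for k n :: nat
    using that by (cases "n = 0") (auto simp: field_simps)
  have x_in: "x n k \<in> {a..b}" if "k \<le> n" for n k
    unfolding x_def using mono_onD[OF f(2), of 0 "real k / real n"] mono_onD[OF f(2), of "real k / real n" 1]
      grid_in[OF that] f(3,4) by auto
  have x_mono: "x n k \<le> x n (Suc k)" if "k < n" for n k
    unfolding x_def using that by (intro mono_onD[OF f(2)] grid_in) (auto simp: divide_right_mono)
  have "a \<le> b" using mono_onD[OF f(2), of 0 1] f(3,4) by simp
  have "R a \<le> R b"
    by (rule DERIV_nonneg_imp_increasing_open[OF \<open>a \<le> b\<close> _ R]) (use R' g_nonneg in force)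
  then have M: "0 \<le> R b - R a" by simp
  define e where "e = r / (R b - R a + 1)"
  have "r / (c + 1) / 2 * c < r" if "0 \<le> c" for c :: real
    using \<open>0 < r\<close> that by (simp add: field_simps, smt (verit) mult_nonneg_nonneg)
  then have small: "e / 2 * (R b - R a) < r"
    unfolding e_def using M .
  have "\<forall>\<^sub>F n in sequentially. \<forall>k<n. \<bar>x n (Suc k) - x n k\<bar> < e"
    unfolding x_def using \<open>0 < r\<close> M
    by (intro uniform_grid_gaps_eventually_small f) (simp add: e_def)
  then show "\<forall>\<^sub>F n in sequentially. dist (?V n) ?I < r"
    using eventually_gt_at_top[of 0]
  proof eventually_elim
    case (elim n)
    have "\<bar>?V n - ?I\<bar> \<le> e / 2 * (R b - R a)"
      unfolding x_def[symmetric]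
      by (rule midpoint_sum_error_derivative[OF R R' g_nonneg x_in])
         (use elim x_mono f(3,4) in \<open>auto simp: x_def\<close>)
    then show ?case using small by (simp add: dist_real_def)
  qed
qed

locale density_on_interval =
  fixes phi :: "real \<Rightarrow> real" and a b :: real
  assumes continuous: "continuous_on UNIV phi"
    and nonneg: "\<And>x. phi x \<ge> 0"
    and has_integral_1: "(phi has_integral 1) UNIV"
    and support: "{x. phi x > 0} = {a<..<b}"
begin

text \<open>On \<open>[a,b]\<close> this is \<open>cdf phi\<close>; integrating over a compact interval makes the FTC available.\<close>

definition F :: "real \<Rightarrow> real" where "F x = integral {a..x} phi"

definition F_inv :: "real \<Rightarrow> real" where "F_inv = the_inv_into {a..b} F"

lemma vanishes_outside: "x \<notin> {a<..<b} \<Longrightarrow> phi x = 0"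
  using support nonneg[of x] by force

lemma pos_inside: "x \<in> {a<..<b} \<Longrightarrow> phi x > 0"
  using support by auto

lemma phi_continuous_on: "continuous_on S phi"
  using continuous continuous_on_subset by blast

lemma a_less_b: "a < b"
proof (rule ccontr)
  assume "\<not> a < b"
  then have "phi = (\<lambda>x. 0)" using vanishes_outside by fastforce
  then show False using has_integral_1 has_integral_unique[of phi 0 UNIV 1] by simp
qed

lemma cdf_eq_F: "x \<in> {a..b} \<Longrightarrow> cdf phi x = F x"
  unfolding cdf_def F_def
  by (rule integral_spike_set) (auto intro!: empty_imp_negligible vanishes_outside)

lemma F_left [simp]: "F a = 0"
  unfolding F_def by simp

lemma F_right [simp]: "F b = 1"
proof -
  have "(phi has_integral 1) {a..b}"
    using has_integral_1
    by (subst has_integral_spike_set_eq) (auto intro!: empty_imp_negligible vanishes_outside)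
  then show ?thesis unfolding F_def by (rule integral_unique)
qed

lemma F_has_derivative: "x \<in> {a<..<b} \<Longrightarrow> (F has_real_derivative phi x) (at x)"
  unfolding F_def[abs_def] by (rule integral_has_real_derivative_interior[OF phi_continuous_on])

lemma F_continuous: "continuous_on {a..b} F"
  unfolding F_def[abs_def]
  by (intro indefinite_integral_continuous_1 integrable_continuous_real phi_continuous_on)

lemma F_strict_mono: "strict_mono_on {a..b} F"
proof (rule strict_mono_onI)
  fix x y assume "x \<in> {a..b}" "y \<in> {a..b}" "x < y"
  then show "F x < F y"
    by (intro DERIV_pos_imp_increasing_open[of x y F] continuous_on_subset[OF F_continuous])
       (auto intro!: exI conjI F_has_derivative pos_inside)
qed

lemma F_image: "F ` {a..b} = {0..1}"
proof
  show "F ` {a..b} \<subseteq> {0..1}"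
    using strict_mono_on_leD[OF F_strict_mono, of a] strict_mono_on_leD[OF F_strict_mono, of _ b]
    by fastforce
  show "{0..1} \<subseteq> F ` {a..b}"
    using IVT'[of F a _ b] F_continuous a_less_b by fastforce
qed

lemma F_inv_F: "x \<in> {a..b} \<Longrightarrow> F_inv (F x) = x"
  unfolding F_inv_def by (rule the_inv_into_f_f[OF strict_mono_on_imp_inj_on[OF F_strict_mono]])

lemma F_F_inv: "t \<in> {0..1} \<Longrightarrow> F (F_inv t) = t"
  unfolding F_inv_def
  by (rule f_the_inv_into_f[OF strict_mono_on_imp_inj_on[OF F_strict_mono]]) (simp add: F_image)

lemma F_inv_in: "t \<in> {0..1} \<Longrightarrow> F_inv t \<in> {a..b}"
  unfolding F_inv_def
  by (rule the_inv_into_into[OF strict_mono_on_imp_inj_on[OF F_strict_mono]]) (auto simp: F_image)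

lemma F_inv_endpoints: "F_inv 0 = a" "F_inv 1 = b"
  using F_inv_F[of a] F_inv_F[of b] a_less_b by auto

lemma F_inv_continuous: "continuous_on {0..1} F_inv"
  using continuous_on_inv[OF F_continuous compact_Icc, of F_inv] F_inv_F F_image by auto

lemma F_inv_mono: "mono_on {0..1} F_inv"
proof (rule mono_onI)
  fix s t :: real assume "s \<in> {0..1}" "t \<in> {0..1}" "s \<le> t"
  then show "F_inv s \<le> F_inv t"
    using strict_mono_on_less_eq[OF F_strict_mono F_inv_in F_inv_in] F_F_inv by metis
qed

lemma F_in_open: "x \<in> {a<..<b} \<Longrightarrow> F x \<in> {0<..<1}"
  using strict_mono_onD[OF F_strict_mono, of a x] strict_mono_onD[OF F_strict_mono, of x b] by auto

lemma F_inv_in_open: "t \<in> {0<..<1} \<Longrightarrow> F_inv t \<in> {a<..<b}"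
  using F_inv_in[of t] F_F_inv[of t] by (cases "F_inv t = a \<or> F_inv t = b") auto

lemma the_inv_into_cdf: "the_inv_into {a..b} (cdf phi) = F_inv"
  unfolding F_inv_def the_inv_into_def by (intro ext arg_cong[where f = The]) (auto simp: cdf_eq_F)

end

locale quantile_transport =
  src: density_on_interval phi1 a1 b1 + tgt: density_on_interval phi2 a2 b2
  for phi1 a1 b1 phi2 a2 b2
begin

definition K :: "real \<Rightarrow> real" where "K x = tgt.F_inv (src.F x)"

lemma Kmap_eq_K: "x \<in> {a1..b1} \<Longrightarrow> Kmap phi1 phi2 a2 b2 x = K x"
  unfolding Kmap_def K_def tgt.the_inv_into_cdf src.cdf_eq_F ..

lemma K_in: "x \<in> {a1..b1} \<Longrightarrow> K x \<in> {a2..b2}"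
  unfolding K_def using src.F_image by (intro tgt.F_inv_in) auto

lemma K_in_open: "x \<in> {a1<..<b1} \<Longrightarrow> K x \<in> {a2<..<b2}"
  unfolding K_def by (intro tgt.F_inv_in_open src.F_in_open)

lemma K_continuous: "continuous_on {a1..b1} K"
  unfolding K_def[abs_def]
  by (rule continuous_on_compose2[OF tgt.F_inv_continuous src.F_continuous]) (use src.F_image in auto)

lemma K_mono: "mono_on {a1..b1} K"
  unfolding K_def
  by (intro mono_onI mono_onD[OF tgt.F_inv_mono] strict_mono_on_leD[OF src.F_strict_mono])
     (use src.F_image in auto)

lemma K_has_derivative:
  assumes x: "x \<in> {a1<..<b1}"
  shows "(K has_real_derivative phi1 x / phi2 (K x)) (at x)"
proof -
  have t: "src.F x \<in> {0<..<1}" using src.F_in_open[OF x] .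
  have "(tgt.F_inv has_real_derivative inverse (phi2 (K x))) (at (src.F x))"
  proof (rule DERIV_inverse_function[where f = tgt.F and a = 0 and b = 1])
    show "(tgt.F has_real_derivative phi2 (K x)) (at (tgt.F_inv (src.F x)))"
      unfolding K_def by (intro tgt.F_has_derivative tgt.F_inv_in_open t)
    show "phi2 (K x) \<noteq> 0" using tgt.pos_inside[OF K_in_open[OF x]] by simp
    show "isCont tgt.F_inv (src.F x)"
      by (rule continuous_on_interior[OF tgt.F_inv_continuous]) (use t in auto)
  qed (use t tgt.F_F_inv in auto)
  from DERIV_chain2[OF this src.F_has_derivative[OF x]] show ?thesis
    unfolding K_def[abs_def] by (simp add: divide_inverse mult.commute)
qed

lemma pullback_primitive_continuous:
  fixes q :: "real \<Rightarrow> real"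
  assumes "continuous_on {a2..b2} q"
  shows "continuous_on {a1..b1} (\<lambda>x. integral {a2..K x} q)"
proof (rule continuous_on_compose2[OF _ K_continuous])
  show "continuous_on {a2..b2} (\<lambda>y. integral {a2..y} q)"
    by (intro indefinite_integral_continuous_1 integrable_continuous_real assms)
qed (use K_in in auto)

lemma pullback_primitive_has_derivative:
  fixes q :: "real \<Rightarrow> real"
  assumes "continuous_on {a2..b2} q" and x: "x \<in> {a1<..<b1}"
  shows "((\<lambda>x. integral {a2..K x} q) has_real_derivative phi1 x / phi2 (K x) * q (K x)) (at x)"
  using DERIV_chain2[OF integral_has_real_derivative_interior[OF assms(1) K_in_open[OF x]]
      K_has_derivative[OF x]]
  by (simp add: mult.commute)

lemma integral_between_K:
  fixes q :: "real \<Rightarrow> real"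
  assumes "continuous_on {a2..b2} q" and "s \<in> {a1..b1}" "t \<in> {a1..b1}" "s \<le> t"
  shows "integral {K s..K t} q = integral {a2..K t} q - integral {a2..K s} q"
proof -
  have "K s \<le> K t" using mono_onD[OF K_mono] assms by blast
  moreover have "a2 \<le> K s" "K t \<le> b2" using K_in assms by auto
  ultimately have "integral {a2..K s} q + integral {K s..K t} q = integral {a2..K t} q"
    by (intro Henstock_Kurzweil_Integration.integral_combine integrable_continuous_real
        continuous_on_subset[OF assms(1)]) auto
  then show ?thesis by linarith
qed

end

theorem mainTheorem1:
  fixes phi1 phi2 q :: "real \<Rightarrow> real" and a1 b1 a2 b2 :: real
  assumes cont1: "continuous_on UNIV phi1"
    and cont2: "continuous_on UNIV phi2"
    and nonneg1: "\<And>x. phi1 x \<ge> 0"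
    and nonneg2: "\<And>x. phi2 x \<ge> 0"
    and dens1: "(phi1 has_integral 1) UNIV"
    and dens2: "(phi2 has_integral 1) UNIV"
    and supp1: "{x. phi1 x > 0} = {a1<..<b1}"
    and supp2: "{y. phi2 y > 0} = {a2<..<b2}"
    and a1_zero: "a1 = 0"
    and q_unif: "uniformly_continuous_on UNIV q"
    and q_nonneg: "\<And>x. q x \<ge> 0"
    and q_int: "q absolutely_integrable_on UNIV"
  shows "(\<lambda>n. \<Sum>k<n.
            (gridpt phi1 a1 b1 n (Suc k) + gridpt phi1 a1 b1 n k) / 2 *
            integral {Kmap phi1 phi2 a2 b2 (gridpt phi1 a1 b1 n k) ..
                      Kmap phi1 phi2 a2 b2 (gridpt phi1 a1 b1 n (Suc k))} q)
         \<longlonglongrightarrow>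
         integral {a1<..<b1}
           (\<lambda>x. x * (phi1 x / phi2 (Kmap phi1 phi2 a2 b2 x)) * q (Kmap phi1 phi2 a2 b2 x))"
proof -
  interpret quantile_transport phi1 a1 b1 phi2 a2 b2
    by unfold_locales (fact assms)+
  have q: "continuous_on {a2..b2} q"
    using uniformly_continuous_imp_continuous[OF q_unif] continuous_on_subset by blast
  define x where "x n k = src.F_inv (real k / real n)" for n k :: nat
  define R where "R y = integral {a2..K y} q" for y
  have "integral {Kmap phi1 phi2 a2 b2 (x n k) .. Kmap phi1 phi2 a2 b2 (x n (Suc k))} q
      = R (x n (Suc k)) - R (x n k)" if "k < n" for n k
  proof -
    have "real k / real n \<in> {0..1}" "real (Suc k) / real n \<in> {0..1}"
      "real k / real n \<le> real (Suc k) / real n"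
      using that by (auto simp: field_simps)
    then show ?thesis unfolding R_def x_def
      using integral_between_K[OF q] Kmap_eq_K src.F_inv_in mono_onD[OF src.F_inv_mono] by simp
  qed
  then have sums: "(\<Sum>k<n. (gridpt phi1 a1 b1 n (Suc k) + gridpt phi1 a1 b1 n k) / 2 *
            integral {Kmap phi1 phi2 a2 b2 (gridpt phi1 a1 b1 n k) ..
                      Kmap phi1 phi2 a2 b2 (gridpt phi1 a1 b1 n (Suc k))} q)
      = (\<Sum>k<n. (x n (Suc k) + x n k) / 2 * (R (x n (Suc k)) - R (x n k)))" for n
    unfolding gridpt_def src.the_inv_into_cdf x_def[symmetric] by simp
  have "(\<lambda>n. \<Sum>k<n. (x n (Suc k) + x n k) / 2 * (R (x n (Suc k)) - R (x n k)))
      \<longlonglongrightarrow> integral {a1..b1} (\<lambda>y. y * (phi1 y / phi2 (K y) * q (K y)))"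
    unfolding x_def R_def
    by (rule midpoint_sums_quantile_grid_tendsto[OF src.F_inv_continuous src.F_inv_mono
          src.F_inv_endpoints pullback_primitive_continuous[OF q]
          pullback_primitive_has_derivative[OF q]])
       (auto intro!: mult_nonneg_nonneg divide_nonneg_nonneg nonneg1 nonneg2 q_nonneg)
  moreover have "integral {a1..b1} (\<lambda>y. y * (phi1 y / phi2 (K y) * q (K y)))
      = integral {a1<..<b1} (\<lambda>y. y * (phi1 y / phi2 (Kmap phi1 phi2 a2 b2 y)) * q (Kmap phi1 phi2 a2 b2 y))"
    unfolding integral_open_interval_real by (intro integral_cong) (simp add: Kmap_eq_K)
  ultimately show ?thesis unfolding sums by simp
qed

end
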